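(* Let $(X,(\cdot,\cdot|\cdot))$ be a 2-inner product space over $\mathbb{K}\in\{\mathbb{R},\mathbb{C}\}$, let $n$ be a positive integer, let $z_1,\dots,z_n,z\in X$ and $\mu_1,\dots,\mu_n\in\mathbb{K}$. Define $A_1=\max_{1\le i\le n}|\mu_i|^2\sum_{i=1}^n\|z_i|z\|^2$; $A_2(\alpha)=\big(\sum_{i=1}^n|\mu_i|^{2\alpha}\big)^{1/\alpha}\big(\sum_{i=1}^n\|z_i|z\|^{2\beta}\big)^{1/\beta}$ for $\alpha>1$, $\frac1\alpha+\frac1\beta=1$; $A_3=\sum_{i=1}^n|\mu_i|^2\max_{1\le i\le n}\|z_i|z\|^2$; and $B_1=\max_{1\le i\le n}|\mu_i|^2\sum_{1\le i\ne j\le n}|(z_i,z_j|z)|$; $B_2(\gamma)=(n-1)^{1/\gamma}\big(\sum_{i=1}^n|\mu_i|^{2\gamma}\big)^{1/\gamma}\big(\sum_{1\le i\ne j\le n}|(z_i,z_j|z)|^{\delta}\big)^{1/\delta}$ for $\gamma>1$, $\frac1\gamma+\frac1\delta=1$; $B_3=(n-1)\sum_{i=1}^n|\mu_i|^2\max_{1\le i\ne j\le n}|(z_i,z_j|z)|$. Then for every choice of $A\in\{A_1,A_2(\alpha),A_3\}$ and $B\in\{B_1,B_2(\gamma),B_3\}$ (with any admissible $\alpha,\gamma$), \[ \Big\|\sum_{i=1}^n\mu_iz_i\,\Big|\,z\Big\|^2\le A+B. \]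
   Context: A 2-inner product on a linear space $X$ of dimension greater than $1$ over $\mathbb{K}$ ($\mathbb{K}=\mathbb{R}$ or $\mathbb{C}$) is a function $(\cdot,\cdot|\cdot):X\times X\times X\to\mathbb{K}$ such that for all $x,x',y,z\in X$ and $\alpha\in\mathbb{K}$: (i) $(x,x|z)\ge 0$, and $(x,x|z)=0$ iff $x$ and $z$ are linearly dependent; (ii) $(x,x|z)=(z,z|x)$; (iii) $(y,x|z)=\overline{(x,y|z)}$; (iv) $(\alpha x,y|z)=\alpha(x,y|z)$; (v) $(x+x',y|z)=(x,y|z)+(x',y|z)$. The associated 2-norm is $\|x|z\|=\sqrt{(x,x|z)}$. Sums and maxima indexed by $1\le i\ne j\le n$ run over all ordered pairs $(i,j)$ with $i\ne j$. *)

theory Defs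
  imports "HOL-Analysis.Analysis"
begin

definition lin_dep2_real :: "'a::real_vector \<Rightarrow> 'a \<Rightarrow> bool" where
  "lin_dep2_real x z \<longleftrightarrow> (\<exists>a b::real. (a \<noteq> 0 \<or> b \<noteq> 0) \<and> a *\<^sub>R x + b *\<^sub>R z = 0)"

definition lin_dep2_complex :: "(complex \<Rightarrow> 'a::ab_group_add \<Rightarrow> 'a) \<Rightarrow> 'a \<Rightarrow> 'a \<Rightarrow> bool" where
  "lin_dep2_complex sc x z \<longleftrightarrow> (\<exists>a b::complex. (a \<noteq> 0 \<or> b \<noteq> 0) \<and> sc a x + sc b z = 0)"

definition two_inner_product_real :: "('a::real_vector \<Rightarrow> 'a \<Rightarrow> 'a \<Rightarrow> real) \<Rightarrow> bool" where
  "two_inner_product_real ip \<longleftrightarrow>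
     (\<exists>x y::'a. \<not> lin_dep2_real x y) \<and>
     (\<forall>x z. ip x x z \<ge> 0 \<and> (ip x x z = 0 \<longleftrightarrow> lin_dep2_real x z)) \<and>
     (\<forall>x z. ip x x z = ip z z x) \<and>
     (\<forall>x y z. ip y x z = ip x y z) \<and>
     (\<forall>a x y z. ip (a *\<^sub>R x) y z = a * ip x y z) \<and>
     (\<forall>x x' y z. ip (x + x') y z = ip x y z + ip x' y z)"

definition two_inner_product_complex ::
    "(complex \<Rightarrow> 'a::ab_group_add \<Rightarrow> 'a) \<Rightarrow> ('a \<Rightarrow> 'a \<Rightarrow> 'a \<Rightarrow> complex) \<Rightarrow> bool" where
  "two_inner_product_complex sc ip \<longleftrightarrow>
     vector_space sc \<and>
     (\<exists>x y::'a. \<not> lin_dep2_complex sc x y) \<and>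
     (\<forall>x z. Im (ip x x z) = 0 \<and> Re (ip x x z) \<ge> 0 \<and> (ip x x z = 0 \<longleftrightarrow> lin_dep2_complex sc x z)) \<and>
     (\<forall>x z. ip x x z = ip z z x) \<and>
     (\<forall>x y z. ip y x z = cnj (ip x y z)) \<and>
     (\<forall>a x y z. ip (sc a x) y z = a * ip x y z) \<and>
     (\<forall>x x' y z. ip (x + x') y z = ip x y z + ip x' y z)"

text \<open>The associated 2-norm \<open>\<parallel>x|z\<parallel> = sqrt (x,x|z)\<close>; since \<open>(x,x|z)\<close> is a nonnegative
  real number, it equals its modulus.\<close>

definition two_norm :: "('a \<Rightarrow> 'a \<Rightarrow> 'a \<Rightarrow> 'k::real_normed_field) \<Rightarrow> 'a \<Rightarrow> 'a \<Rightarrow> real" where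
  "two_norm ip x z = sqrt (norm (ip x x z))"

definition offdiag :: "nat \<Rightarrow> (nat \<times> nat) set" where
  "offdiag n = {(i, j). i \<in> {1..n} \<and> j \<in> {1..n} \<and> i \<noteq> j}"

definition A1 :: "('a \<Rightarrow> 'a \<Rightarrow> 'a \<Rightarrow> 'k::real_normed_field) \<Rightarrow> nat \<Rightarrow> (nat \<Rightarrow> 'a) \<Rightarrow> 'a \<Rightarrow> (nat \<Rightarrow> 'k) \<Rightarrow> real" where
  "A1 ip n zs z mu = (MAX i\<in>{1..n}. norm (mu i) ^ 2) * (\<Sum>i=1..n. two_norm ip (zs i) z ^ 2)"

definition A2 :: "('a \<Rightarrow> 'a \<Rightarrow> 'a \<Rightarrow> 'k::real_normed_field) \<Rightarrow> nat \<Rightarrow> (nat \<Rightarrow> 'a) \<Rightarrow> 'a \<Rightarrow> (nat \<Rightarrow> 'k) \<Rightarrow> real \<Rightarrow> real \<Rightarrow> real" where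
  "A2 ip n zs z mu \<alpha> \<beta> =
     (\<Sum>i=1..n. norm (mu i) powr (2 * \<alpha>)) powr (1 / \<alpha>) *
     (\<Sum>i=1..n. two_norm ip (zs i) z powr (2 * \<beta>)) powr (1 / \<beta>)"

definition A3 :: "('a \<Rightarrow> 'a \<Rightarrow> 'a \<Rightarrow> 'k::real_normed_field) \<Rightarrow> nat \<Rightarrow> (nat \<Rightarrow> 'a) \<Rightarrow> 'a \<Rightarrow> (nat \<Rightarrow> 'k) \<Rightarrow> real" where
  "A3 ip n zs z mu = (\<Sum>i=1..n. norm (mu i) ^ 2) * (MAX i\<in>{1..n}. two_norm ip (zs i) z ^ 2)"

definition B1 :: "('a \<Rightarrow> 'a \<Rightarrow> 'a \<Rightarrow> 'k::real_normed_field) \<Rightarrow> nat \<Rightarrow> (nat \<Rightarrow> 'a) \<Rightarrow> 'a \<Rightarrow> (nat \<Rightarrow> 'k) \<Rightarrow> real" where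
  "B1 ip n zs z mu = (MAX i\<in>{1..n}. norm (mu i) ^ 2) *
     (\<Sum>(i, j)\<in>offdiag n. norm (ip (zs i) (zs j) z))"

definition B2 :: "('a \<Rightarrow> 'a \<Rightarrow> 'a \<Rightarrow> 'k::real_normed_field) \<Rightarrow> nat \<Rightarrow> (nat \<Rightarrow> 'a) \<Rightarrow> 'a \<Rightarrow> (nat \<Rightarrow> 'k) \<Rightarrow> real \<Rightarrow> real \<Rightarrow> real" where
  "B2 ip n zs z mu \<gamma> \<delta> =
     (real n - 1) powr (1 / \<gamma>) *
     (\<Sum>i=1..n. norm (mu i) powr (2 * \<gamma>)) powr (1 / \<gamma>) *
     (\<Sum>(i, j)\<in>offdiag n. norm (ip (zs i) (zs j) z) powr \<delta>) powr (1 / \<delta>)"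

definition B3 :: "('a \<Rightarrow> 'a \<Rightarrow> 'a \<Rightarrow> 'k::real_normed_field) \<Rightarrow> nat \<Rightarrow> (nat \<Rightarrow> 'a) \<Rightarrow> 'a \<Rightarrow> (nat \<Rightarrow> 'k) \<Rightarrow> real" where
  "B3 ip n zs z mu = (real n - 1) * (\<Sum>i=1..n. norm (mu i) ^ 2) *
     (if offdiag n = {} then 0 else (MAX (i, j)\<in>offdiag n. norm (ip (zs i) (zs j) z)))"

definition cor24_bound :: "('a \<Rightarrow> 'a \<Rightarrow> 'a \<Rightarrow> 'k::real_normed_field) \<Rightarrow> nat \<Rightarrow> (nat \<Rightarrow> 'a) \<Rightarrow> 'a \<Rightarrow> (nat \<Rightarrow> 'k)
    \<Rightarrow> 'a \<Rightarrow> real \<Rightarrow> real \<Rightarrow> real \<Rightarrow> real \<Rightarrow> bool" where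
  "cor24_bound ip n zs z mu v \<alpha> \<beta> \<gamma> \<delta> \<longleftrightarrow>
     (\<forall>A\<in>{A1 ip n zs z mu, A2 ip n zs z mu \<alpha> \<beta>, A3 ip n zs z mu}.
      \<forall>B\<in>{B1 ip n zs z mu, B2 ip n zs z mu \<gamma> \<delta>, B3 ip n zs z mu}.
        two_norm ip v z ^ 2 \<le> A + B)"

end

theory Submission
  imports Defs
begin

text \<open>Expanding by sesquilinearity, \<open>\<parallel>\<Sum>\<^sub>i \<mu>\<^sub>i z\<^sub>i|z\<parallel>\<^sup>2\<close> is at most the diagonal sum
  \<open>\<Sum>\<^sub>i |\<mu>\<^sub>i|\<^sup>2 \<parallel>z\<^sub>i|z\<parallel>\<^sup>2\<close> plus the off-diagonal sum \<open>\<Sum>\<^bsub>i \<noteq> j\<^esub> |\<mu>\<^sub>i| |\<mu>\<^sub>j| |(z\<^sub>i,z\<^sub>j|z)|\<close>.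
  The diagonal sum is bounded by each \<open>A\<close> by pulling out a maximum or by Hoelder's inequality.
  In the off-diagonal sum, \<open>|\<mu>\<^sub>i| |\<mu>\<^sub>j| \<le> (|\<mu>\<^sub>i|\<^sup>2 + |\<mu>\<^sub>j|\<^sup>2) / 2\<close> and the symmetry
  \<open>|(z\<^sub>i,z\<^sub>j|z)| = |(z\<^sub>j,z\<^sub>i|z)|\<close> leave \<open>\<Sum>\<^bsub>i \<noteq> j\<^esub> |\<mu>\<^sub>i|\<^sup>2 |(z\<^sub>i,z\<^sub>j|z)|\<close>, which is bounded by
  each \<open>B\<close> in the same two ways; the factors \<open>n - 1\<close> count the pairs containing a given index.\<close>

lemma conjugate_exponent_gt_1:
  fixes p q :: real
  assumes "p > 1" and "1 / p + 1 / q = 1"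
  shows "q > 1"
proof -
  have "1 / q = 1 - 1 / p" using assms(2) by simp
  moreover have "0 < 1 - 1 / p" "1 - 1 / p < 1" using assms(1) by auto
  ultimately have "0 < 1 / q" "1 / q < 1" by auto
  then show "q > 1" by (simp add: divide_less_eq split: if_splits)
qed

lemma Holder_inequality_sum:
  fixes f g :: "'i \<Rightarrow> real"
  assumes fin: "finite I" and p: "p > 1" and pq: "1 / p + 1 / q = 1"
    and f0: "\<And>i. i \<in> I \<Longrightarrow> f i \<ge> 0" and g0: "\<And>i. i \<in> I \<Longrightarrow> g i \<ge> 0"
  shows "(\<Sum>i\<in>I. f i * g i) \<le> (\<Sum>i\<in>I. f i powr p) powr (1 / p) * (\<Sum>i\<in>I. g i powr q) powr (1 / q)"
proof -
  have q: "q > 1" using conjugate_exponent_gt_1[OF p pq] .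
  define F where "F = (\<Sum>i\<in>I. f i powr p)"
  define G where "G = (\<Sum>i\<in>I. g i powr q)"
  show ?thesis
  proof (cases "F = 0 \<or> G = 0")
    case True
    then have "\<forall>i\<in>I. f i * g i = 0"
      using fin f0 g0 by (auto simp: F_def G_def sum_nonneg_eq_0_iff)
    then have "(\<Sum>i\<in>I. f i * g i) = 0" by (intro sum.neutral) simp
    then show ?thesis by simp
  next
    case False
    moreover have "F \<ge> 0" "G \<ge> 0" unfolding F_def G_def by (simp_all add: sum_nonneg)
    ultimately have Fp: "F > 0" and Gp: "G > 0" by auto
    define Fr where "Fr = F powr (1 / p)"
    define Gr where "Gr = G powr (1 / q)"
    have Frp: "Fr > 0" and Grp: "Gr > 0" using Fp Gp by (auto simp: Fr_def Gr_def)
    have FrP: "Fr powr p = F" using Fp p by (simp add: Fr_def powr_powr)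
    have GrP: "Gr powr q = G" using Gp q by (simp add: Gr_def powr_powr)
    have Young: "(f i / Fr) * (g i / Gr) \<le> f i powr p / (p * F) + g i powr q / (q * G)"
      if "i \<in> I" for i
    proof -
      have "(f i / Fr) * (g i / Gr) \<le> (f i / Fr) powr p / p + (g i / Gr) powr q / q"
        by (rule Youngs_inequality) (use p q pq f0 g0 that Frp Grp in auto)
      also have "\<dots> = f i powr p / (p * F) + g i powr q / (q * G)"
        using f0[OF that] g0[OF that] Frp Grp FrP GrP by (simp add: powr_divide mult.commute)
      finally show ?thesis .
    qed
    have "(\<Sum>i\<in>I. f i * g i) / (Fr * Gr) = (\<Sum>i\<in>I. (f i / Fr) * (g i / Gr))"
      by (simp add: sum_divide_distrib)
    also have "\<dots> \<le> (\<Sum>i\<in>I. f i powr p / (p * F) + g i powr q / (q * G))"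
      using Young by (rule sum_mono)
    also have "\<dots> = 1 / p + 1 / q"
      using Fp Gp by (simp add: sum.distrib F_def G_def flip: sum_divide_distrib)
    finally show ?thesis using Frp Grp pq by (simp add: Fr_def Gr_def F_def G_def divide_le_eq)
  qed
qed

lemma sum_mult_le_bound_mult_sum:
  fixes f g :: "'i \<Rightarrow> real"
  assumes "\<And>i. i \<in> I \<Longrightarrow> f i \<le> M" and "\<And>i. i \<in> I \<Longrightarrow> g i \<ge> 0"
  shows "(\<Sum>i\<in>I. f i * g i) \<le> M * (\<Sum>i\<in>I. g i)"
  unfolding sum_distrib_left by (intro sum_mono mult_right_mono) (use assms in auto)

lemma powr_power2:
  fixes x :: real
  assumes "x \<ge> 0"
  shows "(x ^ 2) powr r = x powr (2 * r)"
  using assms by (cases "x = 0") (auto simp: powr_powr[symmetric] powr_realpow)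

lemma offdiag_eq_Sigma: "offdiag n = Sigma {1..n} (\<lambda>i. {1..n} - {i})"
  unfolding offdiag_def by auto

lemma finite_offdiag [simp]: "finite (offdiag n)"
  unfolding offdiag_eq_Sigma by auto

lemma sum_offdiag_fst:
  fixes h :: "nat \<Rightarrow> real"
  shows "(\<Sum>(i, j)\<in>offdiag n. h i) = (real n - 1) * (\<Sum>i=1..n. h i)"
proof (cases "n = 0")
  case True
  then show ?thesis by (simp add: offdiag_def)
next
  case False
  have "(\<Sum>(i, j)\<in>offdiag n. h i) = (\<Sum>i=1..n. \<Sum>j\<in>{1..n} - {i}. h i)"
    unfolding offdiag_eq_Sigma by (subst sum.Sigma) auto
  also have "\<dots> = (\<Sum>i=1..n. (real n - 1) * h i)"
    by (rule sum.cong) (auto simp: of_nat_diff)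
  finally show ?thesis by (simp add: sum_distrib_left)
qed

lemma sum_offdiag_swap:
  "(\<Sum>(i, j)\<in>offdiag n. h i j) = (\<Sum>(i, j)\<in>offdiag n. h j i)"
proof -
  have "offdiag n = prod.swap ` offdiag n" unfolding offdiag_def by auto
  then have "(\<Sum>(i, j)\<in>offdiag n. h i j) = (\<Sum>(i, j)\<in>prod.swap ` offdiag n. h i j)"
    by simp
  also have "\<dots> = (\<Sum>(i, j)\<in>offdiag n. h j i)"
    by (subst sum.reindex) (auto simp: case_prod_beta)
  finally show ?thesis .
qed

lemma sum_square_eq_diag_plus_offdiag:
  "(\<Sum>i=1..n. \<Sum>j=1..n. h i j) = (\<Sum>i=1..n. h i i) + (\<Sum>(i, j)\<in>offdiag n. h i j)"
proof -
  have split: "{1..n} \<times> {1..n} = (\<lambda>i. (i, i)) ` {1..n} \<union> offdiag n"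
    and disjoint: "(\<lambda>i. (i, i)) ` {1..n} \<inter> offdiag n = {}"
    unfolding offdiag_def by auto
  have "(\<Sum>i=1..n. \<Sum>j=1..n. h i j) = (\<Sum>(i, j)\<in>{1..n} \<times> {1..n}. h i j)"
    by (simp add: sum.cartesian_product)
  also have "\<dots> = (\<Sum>(i, j)\<in>(\<lambda>i. (i, i)) ` {1..n}. h i j) + (\<Sum>(i, j)\<in>offdiag n. h i j)"
    unfolding split using disjoint by (intro sum.union_disjoint) auto
  also have "(\<Sum>(i, j)\<in>(\<lambda>i. (i, i)) ` {1..n}. h i j) = (\<Sum>i=1..n. h i i)"
    by (subst sum.reindex) (auto simp: inj_on_def)
  finally show ?thesis .
qed

lemma sum_offdiag_mult_le_sum_offdiag_square:
  fixes a :: "nat \<Rightarrow> real" and c :: "nat \<Rightarrow> nat \<Rightarrow> real"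
  assumes c0: "\<And>i j. c i j \<ge> 0" and c_sym: "\<And>i j. c j i = c i j"
  shows "(\<Sum>(i, j)\<in>offdiag n. a i * a j * c i j) \<le> (\<Sum>(i, j)\<in>offdiag n. a i ^ 2 * c i j)"
proof -
  have "(\<Sum>(i, j)\<in>offdiag n. a i * a j * c i j)
      \<le> (\<Sum>(i, j)\<in>offdiag n. a i ^ 2 * c i j / 2 + a j ^ 2 * c i j / 2)"
  proof (rule sum_mono, clarify)
    fix i j
    have "a i * a j \<le> (a i ^ 2 + a j ^ 2) / 2"
      using sum_squares_bound[of "a i" "a j"] by (simp add: power2_eq_square)
    from mult_right_mono[OF this c0]
    show "a i * a j * c i j \<le> a i ^ 2 * c i j / 2 + a j ^ 2 * c i j / 2"
      by (simp add: field_simps)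
  qed
  also have "\<dots> = (\<Sum>(i, j)\<in>offdiag n. a i ^ 2 * c i j / 2) + (\<Sum>(i, j)\<in>offdiag n. a i ^ 2 * c i j / 2)"
    using sum_offdiag_swap[of "\<lambda>i j. a j ^ 2 * c i j / 2" n]
    by (simp add: sum.distrib case_prod_beta c_sym)
  finally show ?thesis by (simp add: case_prod_beta flip: sum_divide_distrib)
qed

text \<open>\<open>cj\<close> is complex conjugation for complex scalars and the identity for real ones.\<close>

locale sesquilinear_form =
  fixes form :: "'a::ab_group_add \<Rightarrow> 'a \<Rightarrow> 'k::real_normed_field"
    and scale :: "'k \<Rightarrow> 'a \<Rightarrow> 'a"
    and cj :: "'k \<Rightarrow> 'k"
  assumes add_left: "form (x + x') y = form x y + form x' y"
    and scale_left: "form (scale a x) y = a * form x y"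
    and conj_sym: "form y x = cj (form x y)"
    and cj_add: "cj (a + b) = cj a + cj b"
    and cj_mult: "cj (a * b) = cj a * cj b"
    and norm_cj: "norm (cj a) = norm a"
begin

lemma sum_left: "form (\<Sum>i\<in>I. f i) y = (\<Sum>i\<in>I. form (f i) y)"
proof -
  have "form 0 y = 0" using add_left[of 0 0 y] by simp
  then show ?thesis by (induction I rule: infinite_finite_induct) (simp_all add: add_left)
qed

lemma cj_sum: "cj (\<Sum>i\<in>I. f i) = (\<Sum>i\<in>I. cj (f i))"
proof -
  have "cj 0 = 0" using cj_add[of 0 0] by simp
  then show ?thesis by (induction I rule: infinite_finite_induct) (simp_all add: cj_add)
qed

lemma sum_right: "form y (\<Sum>i\<in>I. f i) = (\<Sum>i\<in>I. form y (f i))"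
proof -
  have "form y (\<Sum>i\<in>I. f i) = (\<Sum>i\<in>I. cj (form (f i) y))"
    by (subst conj_sym) (simp add: sum_left cj_sum)
  also have "\<dots> = (\<Sum>i\<in>I. form y (f i))"
    by (simp flip: conj_sym)
  finally show ?thesis .
qed

lemma scale_right: "form y (scale a x) = cj a * form y x"
  by (subst (1 2) conj_sym) (simp add: scale_left cj_mult)

lemma sum_scale_expand:
  "form (\<Sum>i\<in>I. scale (mu i) (zs i)) (\<Sum>j\<in>I. scale (mu j) (zs j))
     = (\<Sum>i\<in>I. \<Sum>j\<in>I. mu i * cj (mu j) * form (zs i) (zs j))"
  by (simp add: sum_left sum_right scale_left scale_right sum_distrib_left mult.assoc,
      subst sum.swap, simp add: ac_simps)

lemma norm_form_commute: "norm (form y x) = norm (form x y)"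
  by (subst conj_sym) (rule norm_cj)

lemma norm_sum_scale_le:
  "norm (form (\<Sum>i\<in>I. scale (mu i) (zs i)) (\<Sum>i\<in>I. scale (mu i) (zs i)))
     \<le> (\<Sum>i\<in>I. \<Sum>j\<in>I. norm (mu i) * norm (mu j) * norm (form (zs i) (zs j)))"
proof -
  have "norm (\<Sum>i\<in>I. \<Sum>j\<in>I. mu i * cj (mu j) * form (zs i) (zs j))
      \<le> (\<Sum>i\<in>I. \<Sum>j\<in>I. norm (mu i * cj (mu j) * form (zs i) (zs j)))"
    by (intro order.trans[OF norm_sum] sum_mono norm_sum)
  then show ?thesis
    by (simp add: sum_scale_expand norm_mult norm_cj)
qed

end

definition diag_sum ::
    "('a \<Rightarrow> 'a \<Rightarrow> 'a \<Rightarrow> 'k::real_normed_field) \<Rightarrow> nat \<Rightarrow> (nat \<Rightarrow> 'a) \<Rightarrow> 'a \<Rightarrow> (nat \<Rightarrow> 'k) \<Rightarrow> real" where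
  "diag_sum ip n zs z mu = (\<Sum>i=1..n. norm (mu i) ^ 2 * two_norm ip (zs i) z ^ 2)"

definition offdiag_sum ::
    "('a \<Rightarrow> 'a \<Rightarrow> 'a \<Rightarrow> 'k::real_normed_field) \<Rightarrow> nat \<Rightarrow> (nat \<Rightarrow> 'a) \<Rightarrow> 'a \<Rightarrow> (nat \<Rightarrow> 'k) \<Rightarrow> real" where
  "offdiag_sum ip n zs z mu =
     (\<Sum>(i, j)\<in>offdiag n. norm (mu i) * norm (mu j) * norm (ip (zs i) (zs j) z))"

lemma two_norm_nonneg: "two_norm ip x z \<ge> 0"
  by (simp add: two_norm_def)

lemma two_norm_sum_scale_le:
  assumes "sesquilinear_form (\<lambda>x y. ip x y z) sc cj"
  shows "two_norm ip (\<Sum>i=1..n. sc (mu i) (zs i)) z ^ 2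
           \<le> diag_sum ip n zs z mu + offdiag_sum ip n zs z mu"
proof -
  have "two_norm ip (\<Sum>i=1..n. sc (mu i) (zs i)) z ^ 2
      \<le> (\<Sum>i=1..n. \<Sum>j=1..n. norm (mu i) * norm (mu j) * norm (ip (zs i) (zs j) z))"
    unfolding two_norm_def by (simp add: sesquilinear_form.norm_sum_scale_le[OF assms])
  also have "\<dots> = diag_sum ip n zs z mu + offdiag_sum ip n zs z mu"
    unfolding sum_square_eq_diag_plus_offdiag diag_sum_def offdiag_sum_def two_norm_def
    by (simp add: power2_eq_square)
  finally show ?thesis .
qed

lemma diag_sum_le_A1: "diag_sum ip n zs z mu \<le> A1 ip n zs z mu"
  unfolding diag_sum_def A1_def by (rule sum_mult_le_bound_mult_sum) auto

lemma diag_sum_le_A2: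
  assumes "\<alpha> > 1" and "1 / \<alpha> + 1 / \<beta> = 1"
  shows "diag_sum ip n zs z mu \<le> A2 ip n zs z mu \<alpha> \<beta>"
proof -
  have "diag_sum ip n zs z mu \<le> (\<Sum>i=1..n. (norm (mu i) ^ 2) powr \<alpha>) powr (1 / \<alpha>) *
     (\<Sum>i=1..n. (two_norm ip (zs i) z ^ 2) powr \<beta>) powr (1 / \<beta>)"
    unfolding diag_sum_def by (rule Holder_inequality_sum) (use assms in auto)
  then show ?thesis
    unfolding A2_def by (simp add: powr_power2 two_norm_nonneg)
qed

lemma diag_sum_le_A3: "diag_sum ip n zs z mu \<le> A3 ip n zs z mu"
proof -
  have "(\<Sum>i=1..n. two_norm ip (zs i) z ^ 2 * norm (mu i) ^ 2)
      \<le> (MAX i\<in>{1..n}. two_norm ip (zs i) z ^ 2) * (\<Sum>i=1..n. norm (mu i) ^ 2)"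
    by (rule sum_mult_le_bound_mult_sum) auto
  then show ?thesis
    unfolding diag_sum_def A3_def by (simp add: mult.commute)
qed

lemma offdiag_sum_le_offdiag_square_sum:
  assumes "\<And>x y. norm (ip y x z) = norm (ip x y z)"
  shows "offdiag_sum ip n zs z mu \<le> (\<Sum>(i, j)\<in>offdiag n. norm (mu i) ^ 2 * norm (ip (zs i) (zs j) z))"
  unfolding offdiag_sum_def by (rule sum_offdiag_mult_le_sum_offdiag_square) (use assms in auto)

lemma offdiag_square_sum_le_B1:
  "(\<Sum>(i, j)\<in>offdiag n. norm (mu i) ^ 2 * norm (ip (zs i) (zs j) z)) \<le> B1 ip n zs z mu"
  unfolding B1_def split_def
  by (rule sum_mult_le_bound_mult_sum) (auto simp: offdiag_def)

lemma offdiag_square_sum_le_B2: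
  assumes "\<gamma> > 1" and "1 / \<gamma> + 1 / \<delta> = 1"
  shows "(\<Sum>(i, j)\<in>offdiag n. norm (mu i) ^ 2 * norm (ip (zs i) (zs j) z)) \<le> B2 ip n zs z mu \<gamma> \<delta>"
proof -
  have "(\<Sum>(i, j)\<in>offdiag n. norm (mu i) ^ 2 * norm (ip (zs i) (zs j) z))
      \<le> (\<Sum>(i, j)\<in>offdiag n. (norm (mu i) ^ 2) powr \<gamma>) powr (1 / \<gamma>) *
         (\<Sum>(i, j)\<in>offdiag n. norm (ip (zs i) (zs j) z) powr \<delta>) powr (1 / \<delta>)"
    unfolding split_def by (rule Holder_inequality_sum) (use assms in auto)
  also have "(\<Sum>(i, j)\<in>offdiag n. (norm (mu i) ^ 2) powr \<gamma>)
      = (real n - 1) * (\<Sum>i=1..n. norm (mu i) powr (2 * \<gamma>))"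
    by (simp add: powr_power2 sum_offdiag_fst)
  also have "((real n - 1) * (\<Sum>i=1..n. norm (mu i) powr (2 * \<gamma>))) powr (1 / \<gamma>)
      = (real n - 1) powr (1 / \<gamma>) * (\<Sum>i=1..n. norm (mu i) powr (2 * \<gamma>)) powr (1 / \<gamma>)"
    by (rule powr_mult)
  finally show ?thesis unfolding B2_def .
qed

lemma offdiag_square_sum_le_B3:
  "(\<Sum>(i, j)\<in>offdiag n. norm (mu i) ^ 2 * norm (ip (zs i) (zs j) z)) \<le> B3 ip n zs z mu"
proof (cases "offdiag n = {}")
  case False
  have "(\<Sum>(i, j)\<in>offdiag n. norm (ip (zs i) (zs j) z) * norm (mu i) ^ 2)
      \<le> (MAX (i, j)\<in>offdiag n. norm (ip (zs i) (zs j) z)) * (\<Sum>(i, j)\<in>offdiag n. norm (mu i) ^ 2)"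
    unfolding split_def by (rule sum_mult_le_bound_mult_sum) auto
  then show ?thesis
    using False by (simp add: B3_def sum_offdiag_fst mult.commute mult.left_commute)
qed (simp add: B3_def)

lemma cor24_bound_if_sesquilinear:
  assumes sesq: "sesquilinear_form (\<lambda>x y. ip x y z) sc cj"
    and "\<alpha> > 1" and "1 / \<alpha> + 1 / \<beta> = 1"
    and "\<gamma> > 1" and "1 / \<gamma> + 1 / \<delta> = 1"
  shows "cor24_bound ip n zs z mu (\<Sum>i=1..n. sc (mu i) (zs i)) \<alpha> \<beta> \<gamma> \<delta>"
  unfolding cor24_bound_def
proof (intro ballI)
  fix A B
  assume A: "A \<in> {A1 ip n zs z mu, A2 ip n zs z mu \<alpha> \<beta>, A3 ip n zs z mu}"
    and B: "B \<in> {B1 ip n zs z mu, B2 ip n zs z mu \<gamma> \<delta>, B3 ip n zs z mu}"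
  have diag: "diag_sum ip n zs z mu \<le> A"
    using A diag_sum_le_A1 diag_sum_le_A2[OF assms(2,3)] diag_sum_le_A3 by auto
  have "offdiag_sum ip n zs z mu \<le> (\<Sum>(i, j)\<in>offdiag n. norm (mu i) ^ 2 * norm (ip (zs i) (zs j) z))"
    using sesquilinear_form.norm_form_commute[OF sesq] by (rule offdiag_sum_le_offdiag_square_sum)
  also have "\<dots> \<le> B"
    using B offdiag_square_sum_le_B1[of mu ip zs z n] offdiag_square_sum_le_B3[of mu ip zs z n]
      offdiag_square_sum_le_B2[OF assms(4,5), of mu ip zs z n] by auto
  finally have "offdiag_sum ip n zs z mu \<le> B" .
  moreover have "two_norm ip (\<Sum>i=1..n. sc (mu i) (zs i)) z ^ 2
      \<le> diag_sum ip n zs z mu + offdiag_sum ip n zs z mu"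
    using sesq by (rule two_norm_sum_scale_le)
  ultimately show "two_norm ip (\<Sum>i=1..n. sc (mu i) (zs i)) z ^ 2 \<le> A + B"
    using diag by linarith
qed

lemma two_inner_product_real_sesquilinear:
  fixes ip :: "'a::real_vector \<Rightarrow> 'a \<Rightarrow> 'a \<Rightarrow> real"
  assumes "two_inner_product_real ip"
  shows "sesquilinear_form (\<lambda>x y. ip x y z) scaleR id"
  using assms unfolding two_inner_product_real_def sesquilinear_form_def
  by (intro conjI allI) (blast | simp)+

lemma two_inner_product_complex_sesquilinear:
  assumes "two_inner_product_complex sc ip"
  shows "sesquilinear_form (\<lambda>x y. ip x y z) sc cnj"
  using assms unfolding two_inner_product_complex_def sesquilinear_form_def
  by (intro conjI allI) (blast | simp)+

theorem corollary2p4: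
  fixes ipR :: "'a::real_vector \<Rightarrow> 'a \<Rightarrow> 'a \<Rightarrow> real"
    and zsR :: "nat \<Rightarrow> 'a" and zR :: 'a and muR :: "nat \<Rightarrow> real"
    and scC :: "complex \<Rightarrow> 'b::ab_group_add \<Rightarrow> 'b"
    and ipC :: "'b \<Rightarrow> 'b \<Rightarrow> 'b \<Rightarrow> complex"
    and zsC :: "nat \<Rightarrow> 'b" and zC :: 'b and muC :: "nat \<Rightarrow> complex"
    and n :: nat and \<alpha> \<beta> \<gamma> \<delta> :: real
  assumes "n \<ge> 1"
    and "\<alpha> > 1" and "1 / \<alpha> + 1 / \<beta> = 1"
    and "\<gamma> > 1" and "1 / \<gamma> + 1 / \<delta> = 1"
  shows "(two_inner_product_real ipR \<longrightarrow>
            cor24_bound ipR n zsR zR muR (\<Sum>i=1..n. muR i *\<^sub>R zsR i) \<alpha> \<beta> \<gamma> \<delta>)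
       \<and> (two_inner_product_complex scC ipC \<longrightarrow>
            cor24_bound ipC n zsC zC muC (\<Sum>i=1..n. scC (muC i) (zsC i)) \<alpha> \<beta> \<gamma> \<delta>)"
proof (intro conjI impI)
  assume "two_inner_product_real ipR"
  from two_inner_product_real_sesquilinear[OF this]
  show "cor24_bound ipR n zsR zR muR (\<Sum>i=1..n. muR i *\<^sub>R zsR i) \<alpha> \<beta> \<gamma> \<delta>"
    using assms(2-5) by (rule cor24_bound_if_sesquilinear)
next
  assume "two_inner_product_complex scC ipC"
  from two_inner_product_complex_sesquilinear[OF this]
  show "cor24_bound ipC n zsC zC muC (\<Sum>i=1..n. scC (muC i) (zsC i)) \<alpha> \<beta> \<gamma> \<delta>"
    using assms(2-5) by (rule cor24_bound_if_sesquilinear)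
qed

end
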